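(* (Darboux transformation of eigenfunctions.) Let $(\Omega(\mathcal{A}),\mathrm{d},\bar{\mathrm{d}})$ be a bidifferential graded algebra and $\phi\in\mathcal{A}$. Let $\Delta,\Delta'\in\mathcal{A}$ satisfy $\bar{\mathrm{d}}\Delta=(\mathrm{d}\Delta)\Delta$ and $\bar{\mathrm{d}}\Delta'=(\mathrm{d}\Delta')\Delta'$. Let $\psi\in\mathcal{A}$ satisfy $\bar{\mathrm{d}}\psi=(\mathrm{d}\phi)\psi+(\mathrm{d}\psi)\Delta$, let $\theta\in\mathcal{A}$ be invertible with $\bar{\mathrm{d}}\theta=(\mathrm{d}\phi)\theta+(\mathrm{d}\theta)\Delta'$, let $C'\in\mathcal{A}$ with $\mathrm{d}C'=0$, and let $\mathcal{M}\in\mathcal{A}$ satisfy $\bar{\mathrm{d}}\mathcal{M}=(\mathrm{d}\mathcal{M})\Delta$ and $\Delta\mathcal{M}=\mathcal{M}\Delta$. Set $$\phi':=\phi+\theta\Delta'\theta^{-1}-C',\qquad \psi':=(\psi\Delta-\theta\Delta'\theta^{-1}\psi)\,\mathcal{M}.$$ Then $\bar{\mathrm{d}}\psi'=(\mathrm{d}\phi')\,\psi'+(\mathrm{d}\psi')\,\Delta$.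
   Context: $\mathcal{A}$ is a unital associative algebra over $\mathbb{C}$ with identity $I$. A bidifferential graded algebra $(\Omega(\mathcal{A}),\mathrm{d},\bar{\mathrm{d}})$ consists of a graded associative algebra $\Omega(\mathcal{A})=\bigoplus_{r\ge 0}\Omega^r(\mathcal{A})$ with $\Omega^0(\mathcal{A})=\mathcal{A}$ (each $\Omega^r(\mathcal{A})$ an $\mathcal{A}$-bimodule) together with two linear maps $\mathrm{d},\bar{\mathrm{d}}:\Omega^r(\mathcal{A})\to\Omega^{r+1}(\mathcal{A})$ satisfying the graded Leibniz rule $\mathrm{d}(\alpha\beta)=(\mathrm{d}\alpha)\beta+(-1)^r\alpha\,\mathrm{d}\beta$ for $\alpha\in\Omega^r(\mathcal{A})$ (and likewise for $\bar{\mathrm{d}}$), and $\mathrm{d}^2=\bar{\mathrm{d}}^2=0$, $\mathrm{d}\bar{\mathrm{d}}+\bar{\mathrm{d}}\mathrm{d}=0$. *)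

theory Defs
  imports Complex_Main
begin

text \<open>A graded associative unital complex algebra Omega = direct sum of Om r (r \<ge> 0),
  modelled as a ring type 'w together with the homogeneous components Om r,
  and the complex scalars acting through a central unital ring homomorphism
  sc :: complex \<Rightarrow> 'w (scalar multiplication c . x = sc c * x).
  The algebra A is Om 0.\<close>

definition graded_algebra ::
  "(complex \<Rightarrow> 'w::ring_1) \<Rightarrow> (nat \<Rightarrow> 'w set) \<Rightarrow> bool" where
  "graded_algebra sc Om \<longleftrightarrow>
     sc 1 = 1 \<and> (\<forall>a b. sc (a + b) = sc a + sc b) \<and> (\<forall>a b. sc (a * b) = sc a * sc b)
   \<and> (\<forall>c x. sc c * x = x * sc c)
   \<and> (\<forall>c. sc c \<in> Om 0)
   \<and> (\<forall>r. 0 \<in> Om r \<and> (\<forall>x\<in>Om r. \<forall>y\<in>Om r. x + y \<in> Om r)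
          \<and> (\<forall>c. \<forall>x\<in>Om r. sc c * x \<in> Om r))
   \<and> (\<forall>r s. \<forall>x\<in>Om r. \<forall>y\<in>Om s. x * y \<in> Om (r + s))
   \<and> (\<forall>w. \<exists>n x. (\<forall>i<n. x i \<in> Om i) \<and> w = (\<Sum>i<n. x i))
   \<and> (\<forall>n x. (\<forall>i<n. x i \<in> Om i) \<and> (\<Sum>i<n. x i) = 0 \<longrightarrow> (\<forall>i<n. x i = 0))"

definition graded_derivation ::
  "(complex \<Rightarrow> 'w::ring_1) \<Rightarrow> (nat \<Rightarrow> 'w set) \<Rightarrow> ('w \<Rightarrow> 'w) \<Rightarrow> bool" where
  "graded_derivation sc Om d \<longleftrightarrow>
     (\<forall>x y. d (x + y) = d x + d y) \<and> (\<forall>c x. d (sc c * x) = sc c * d x)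
   \<and> (\<forall>r. \<forall>x\<in>Om r. d x \<in> Om (Suc r))
   \<and> (\<forall>r. \<forall>a\<in>Om r. \<forall>b. d (a * b) = d a * b + (-1) ^ r * a * d b)"

definition bidifferential_graded_algebra ::
  "(complex \<Rightarrow> 'w::ring_1) \<Rightarrow> (nat \<Rightarrow> 'w set) \<Rightarrow> ('w \<Rightarrow> 'w) \<Rightarrow> ('w \<Rightarrow> 'w) \<Rightarrow> bool" where
  "bidifferential_graded_algebra sc Om d db \<longleftrightarrow>
     graded_algebra sc Om \<and> graded_derivation sc Om d \<and> graded_derivation sc Om db
   \<and> (\<forall>x. d (d x) = 0) \<and> (\<forall>x. db (db x) = 0) \<and> (\<forall>x. d (db x) + db (d x) = 0)"

end

theory Submission
  imports Defs
begin

text \<open>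
  Only the degree-0 part of the bidifferential calculus is involved: both
  d and db are additive and satisfy the untwisted Leibniz rule D(a b) = (D a) b + a (D b)
  for a in the algebra Om 0.  Writing T = theta Delta' theta^-1, the proof has three steps:
  (1) the dressing lemma: T solves db T = (d phi) T + (d T) T - T (d phi);
  (2) chi = psi Delta - T psi solves the eigenfunction equation for phi + T;
  (3) right multiplication by M (with db M = (d M) Delta and M Delta = Delta M)
      preserves the eigenfunction equation.
  Since d C' = 0, the potential phi' = phi + T - C' has d phi' = d phi + d T, and the
  theorem follows.
\<close>

lemma graded_algebra_mult0:
  assumes "graded_algebra sc Om" "x \<in> Om 0" "y \<in> Om 0"
  shows "x * y \<in> Om 0"
  using assms unfolding graded_algebra_def by (metis add_0)

lemma graded_algebra_one0:
  assumes "graded_algebra sc Om"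
  shows "1 \<in> Om 0"
  using assms unfolding graded_algebra_def by metis

text \<open>Each homogeneous component is closed under differences, since -1 acts as sc(-1).\<close>
lemma graded_algebra_diff:
  assumes GA: "graded_algebra sc Om" and x: "x \<in> Om r" and y: "y \<in> Om r"
  shows "x - y \<in> Om r"
proof -
  have add: "\<And>a b. sc (a + b) = sc a + sc b"
    using GA unfolding graded_algebra_def by metis
  have one: "sc 1 = 1"
    using GA unfolding graded_algebra_def by metis
  have "sc 0 = sc 0 + sc 0" using add[of 0 0] by (metis add_0)
  then have "sc 0 = 0" by (metis add_cancel_right_right)
  then have "sc (-1) + 1 = 0"
    using add[of "-1" 1] one by (metis add.left_inverse)
  then have "sc (-1) = -1" by (simp add: eq_neg_iff_add_eq_0)
  then have "- y \<in> Om r" using GA y unfolding graded_algebra_def by (metis mult_minus1)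
  then show ?thesis using GA x unfolding graded_algebra_def by (metis diff_conv_add_uminus)
qed

lemma graded_derivation_add:
  assumes "graded_derivation sc Om D"
  shows "D (x + y) = D x + D y"
  using assms unfolding graded_derivation_def by blast

lemma graded_derivation_diff:
  assumes "graded_derivation sc Om D"
  shows "D (x - y) = D x - D y"
  using graded_derivation_add[OF assms, of "x - y" y] by (simp add: algebra_simps)

lemma graded_derivation_Leibniz0:
  assumes "graded_derivation sc Om D" "a \<in> Om 0"
  shows "D (a * b) = D a * b + a * D b"
  using assms unfolding graded_derivation_def by (metis mult_1 power_0)

lemma graded_derivation_one:
  assumes "graded_algebra sc Om" "graded_derivation sc Om D"
  shows "D 1 = 0"
  using graded_derivation_Leibniz0[OF assms(2) graded_algebra_one0[OF assms(1)], of 1] by simp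

lemma graded_derivation_inverse:
  assumes GA: "graded_algebra sc Om" and D: "graded_derivation sc Om D"
    and \<theta>: "\<theta> \<in> Om 0" and inv: "\<theta> * \<theta>inv = 1" "\<theta>inv * \<theta> = 1"
  shows "D \<theta>inv = - (\<theta>inv * D \<theta> * \<theta>inv)"
proof -
  have "D \<theta> * \<theta>inv + \<theta> * D \<theta>inv = 0"
    using graded_derivation_Leibniz0[OF D \<theta>, of \<theta>inv] inv graded_derivation_one[OF GA D] by simp
  then have "\<theta>inv * (\<theta> * D \<theta>inv) = - (\<theta>inv * D \<theta> * \<theta>inv)"
    by (metis add_eq_0_iff mult.assoc mult_minus_right)
  then show ?thesis
    by (metis inv(2) mult.assoc mult_1)
qed

locale derivation_pair =
  fixes sc :: "complex \<Rightarrow> 'w::ring_1" and Om :: "nat \<Rightarrow> 'w set" and d db :: "'w \<Rightarrow> 'w"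
  assumes GA: "graded_algebra sc Om"
    and Gd: "graded_derivation sc Om d"
    and Gdb: "graded_derivation sc Om db"
begin

lemmas mult0 = graded_algebra_mult0[OF GA]
lemmas d_diff = graded_derivation_diff[OF Gd]
lemmas db_diff = graded_derivation_diff[OF Gdb]
lemmas d_Leibniz = graded_derivation_Leibniz0[OF Gd]
lemmas db_Leibniz = graded_derivation_Leibniz0[OF Gdb]

lemma dressing:
  assumes "\<theta> \<in> Om 0" "\<Delta>' \<in> Om 0" "\<theta>inv \<in> Om 0"
    and inv: "\<theta> * \<theta>inv = 1" "\<theta>inv * \<theta> = 1"
    and hD': "db \<Delta>' = d \<Delta>' * \<Delta>'"
    and h\<theta>: "db \<theta> = d \<phi> * \<theta> + d \<theta> * \<Delta>'"
  defines "T \<equiv> \<theta> * \<Delta>' * \<theta>inv"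
  shows "db T = d \<phi> * T + d T * T - T * d \<phi>"
proof -
  have \<theta>\<Delta>': "\<theta> * \<Delta>' \<in> Om 0" using assms mult0 by blast
  have dinv: "d \<theta>inv = - (\<theta>inv * d \<theta> * \<theta>inv)"
    using graded_derivation_inverse[OF GA Gd] assms by blast
  have dbinv: "db \<theta>inv = - (\<theta>inv * db \<theta> * \<theta>inv)"
    using graded_derivation_inverse[OF GA Gdb] assms by blast
  have c1: "\<theta>inv * (\<theta> * x) = x" for x by (metis inv(2) mult.assoc mult_1)
  have dT: "d T = d \<theta> * \<Delta>' * \<theta>inv + \<theta> * d \<Delta>' * \<theta>inv + \<theta> * \<Delta>' * d \<theta>inv"
    unfolding T_def using d_Leibniz[OF \<theta>\<Delta>'] d_Leibniz assms by (simp add: algebra_simps)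
  have dbT: "db T = db \<theta> * \<Delta>' * \<theta>inv + \<theta> * db \<Delta>' * \<theta>inv + \<theta> * \<Delta>' * db \<theta>inv"
    unfolding T_def using db_Leibniz[OF \<theta>\<Delta>'] db_Leibniz assms by (simp add: algebra_simps)
  show ?thesis
    unfolding dbT dT unfolding dbinv dinv h\<theta> hD' T_def by (simp add: algebra_simps c1 inv)
qed

lemma dressed_eigenfunction:
  assumes "\<psi> \<in> Om 0" "T \<in> Om 0"
    and hD: "db \<Delta> = d \<Delta> * \<Delta>"
    and h\<psi>: "db \<psi> = d \<phi> * \<psi> + d \<psi> * \<Delta>"
    and hT: "db T = d \<phi> * T + d T * T - T * d \<phi>"
  defines "\<chi> \<equiv> \<psi> * \<Delta> - T * \<psi>"
  shows "db \<chi> = (d \<phi> + d T) * \<chi> + d \<chi> * \<Delta>"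
proof -
  have d\<chi>: "d \<chi> = d \<psi> * \<Delta> + \<psi> * d \<Delta> - (d T * \<psi> + T * d \<psi>)"
    unfolding \<chi>_def d_diff using d_Leibniz assms by simp
  have db\<chi>: "db \<chi> = db \<psi> * \<Delta> + \<psi> * db \<Delta> - (db T * \<psi> + T * db \<psi>)"
    unfolding \<chi>_def db_diff using db_Leibniz assms by simp
  show ?thesis
    unfolding db\<chi> d\<chi> unfolding hT h\<psi> hD \<chi>_def by (simp add: algebra_simps)
qed

lemma eigenfunction_mult_right:
  assumes "\<chi> \<in> Om 0"
    and h\<chi>: "db \<chi> = d \<phi> * \<chi> + d \<chi> * \<Delta>"
    and hM: "db M = d M * \<Delta>" "\<Delta> * M = M * \<Delta>"
  shows "db (\<chi> * M) = d \<phi> * (\<chi> * M) + d (\<chi> * M) * \<Delta>"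
proof -
  have "db (\<chi> * M) = (d \<phi> * \<chi> + d \<chi> * \<Delta>) * M + \<chi> * (d M * \<Delta>)"
    using db_Leibniz[OF assms(1)] h\<chi> hM(1) by simp
  also have "\<dots> = d \<phi> * (\<chi> * M) + (d \<chi> * M + \<chi> * d M) * \<Delta>"
    by (simp add: algebra_simps hM(2))
  finally show ?thesis
    using d_Leibniz[OF assms(1)] by simp
qed

end

theorem mainTheorem5:
  fixes sc :: "complex \<Rightarrow> 'w::ring_1" and Om :: "nat \<Rightarrow> 'w set" and d db :: "'w \<Rightarrow> 'w"
    and \<phi> \<Delta> \<Delta>' \<psi> \<theta> \<theta>inv C' M :: 'w
  assumes bdga: "bidifferential_graded_algebra sc Om d db"
    and A: "\<phi> \<in> Om 0" "\<Delta> \<in> Om 0" "\<Delta>' \<in> Om 0" "\<psi> \<in> Om 0" "\<theta> \<in> Om 0"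
           "\<theta>inv \<in> Om 0" "C' \<in> Om 0" "M \<in> Om 0"
    and hD: "db \<Delta> = d \<Delta> * \<Delta>"
    and hD': "db \<Delta>' = d \<Delta>' * \<Delta>'"
    and hpsi: "db \<psi> = d \<phi> * \<psi> + d \<psi> * \<Delta>"
    and inv: "\<theta> * \<theta>inv = 1" "\<theta>inv * \<theta> = 1"
    and htheta: "db \<theta> = d \<phi> * \<theta> + d \<theta> * \<Delta>'"
    and hC: "d C' = 0"
    and hM: "db M = d M * \<Delta>" "\<Delta> * M = M * \<Delta>"
  shows "let \<phi>' = \<phi> + \<theta> * \<Delta>' * \<theta>inv - C';
             \<psi>' = (\<psi> * \<Delta> - \<theta> * \<Delta>' * \<theta>inv * \<psi>) * M
         in db \<psi>' = d \<phi>' * \<psi>' + d \<psi>' * \<Delta>"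
proof -
  interpret derivation_pair sc Om d db
    using bdga unfolding bidifferential_graded_algebra_def by unfold_locales auto
  define T where "T = \<theta> * \<Delta>' * \<theta>inv"
  define \<chi> where "\<chi> = \<psi> * \<Delta> - T * \<psi>"
  have T0: "T \<in> Om 0" unfolding T_def using A mult0 by blast
  have \<chi>0: "\<chi> \<in> Om 0"
    unfolding \<chi>_def using A T0 mult0 graded_algebra_diff[OF GA] by blast
  have hT: "db T = d \<phi> * T + d T * T - T * d \<phi>"
    unfolding T_def using dressing A inv hD' htheta by blast
  have "db \<chi> = d (\<phi> + T - C') * \<chi> + d \<chi> * \<Delta>"
    using dressed_eigenfunction[OF A(4) T0 hD hpsi hT] graded_derivation_add[OF Gd] d_diff hC
    unfolding \<chi>_def by simp
  then have "db (\<chi> * M) = d (\<phi> + T - C') * (\<chi> * M) + d (\<chi> * M) * \<Delta>"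
    using eigenfunction_mult_right[OF \<chi>0 _ hM] by blast
  then show ?thesis
    unfolding Let_def T_def \<chi>_def .
qed

end
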